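(* For $\alpha\in(0,\pi)$ let $\mathfrak{K}_\alpha(\tau):=\big(4\sin^2(\alpha)+(\sqrt\tau-1/\sqrt\tau)^2\big)^{-1/4}$, $\tau>0$, and $\widehat{\mathfrak{K}}_\alpha(\lambda):=\int_0^\infty\mathfrak{K}_\alpha(r)r^{-\lambda}\,dr/r$. Then for all $\alpha\in(0,\pi)$, $\widehat{\mathfrak{K}}_\alpha(\lambda)$ is well defined and analytic in the strip $|\mathrm{Re}\,\lambda|<1/4$. Additionally, $\widehat{\mathfrak{K}}_{\pi/2}(\lambda)-\widehat{\mathfrak{K}}_\alpha(\lambda)$ (the Mellin transform of $\mathfrak{K}_{\pi/2}-\mathfrak{K}_\alpha$) is well defined and analytic in the strip $|\mathrm{Re}\,\lambda|<5/4$.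
   Context: The Mellin transform of a function $f$ on $(0,\infty)$ is $\widehat f(\lambda):=\int_0^\infty f(r)r^{-\lambda}\,dr/r$. *)

theory Defs
  imports "HOL-Analysis.Analysis"
begin

definition Kfrak :: "real \<Rightarrow> real \<Rightarrow> real" where
  "Kfrak \<alpha> \<tau> = (4 * (sin \<alpha>)\<^sup>2 + (sqrt \<tau> - 1 / sqrt \<tau>)\<^sup>2) powr (-1/4)"

definition mellin_integrand :: "(real \<Rightarrow> real) \<Rightarrow> complex \<Rightarrow> real \<Rightarrow> complex" where
  "mellin_integrand f s r = complex_of_real (f r) * (complex_of_real r) powr (- s - 1)"

definition mellin :: "(real \<Rightarrow> real) \<Rightarrow> complex \<Rightarrow> complex" where
  "mellin f s = integral {0<..} (mellin_integrand f s)"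

end

theory Submission
  imports Defs "HOL-Complex_Analysis.Complex_Analysis"
begin

(* If |f r| \<le> C min(r^a, r^-a) on (0,\<infinity>), then for |Re s| \<le> a - d the Mellin integrand
   f(r) r^(-s-1) is dominated, uniformly in s, by the integrable weight C min(r^d, r^-d) / r.
   This gives absolute integrability on the strip |Re s| < a, and it makes the truncated
   transforms over [1/k, k], which are entire by differentiation under the integral sign,
   converge locally uniformly; so the transform is holomorphic by Weierstrass' theorem.
   For r > 0, K_\<alpha>(r) = (4 sin^2 \<alpha> + r + 1/r - 2)^(-1/4), and the base is at least
   sin^2 \<alpha> (r + 1/r) \<ge> sin^2 \<alpha> max(r, 1/r), so K_\<alpha> decays with order 1/4 at 0 and at \<infinity>.
   The bases of K_(\<pi>/2) and K_\<alpha> differ by the constant 4 cos^2 \<alpha> \<le> 4, so by the mean value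
   theorem |K_(\<pi>/2) - K_\<alpha>| is at most the base of K_\<alpha> to the power -5/4, which decays with
   order 5/4. *)

definition two_sided_decay :: "real \<Rightarrow> real \<Rightarrow> real" where
  "two_sided_decay a r = (if r \<le> 1 then r powr a else r powr (-a))"

lemma two_sided_decay_pos: "r > 0 \<Longrightarrow> two_sided_decay a r > 0"
  by (simp add: two_sided_decay_def)

lemma two_sided_decay_div_integrable:
  assumes "d > 0"
  shows "(\<lambda>r. two_sided_decay d r / r) integrable_on {0<..}"
proof (rule integrable_Un')
  show "(\<lambda>r. two_sided_decay d r / r) integrable_on {0<..1}"
    by (rule integrable_eq[OF integrable_on_powr_from_0'[of "d - 1" 1]])
       (use assms in \<open>auto simp: two_sided_decay_def powr_diff\<close>)
  have "(\<lambda>r. r powr (-d - 1)) integrable_on {1..}"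
    using has_integral_powr_to_inf[of "-d - 1" 1] assms unfolding integrable_on_def by auto
  then show "(\<lambda>r. two_sided_decay d r / r) integrable_on {1..}"
    by (rule integrable_eq) (auto simp: two_sided_decay_def powr_diff)
  show "negligible ({0<..1::real} \<inter> {1..})"
    by (rule negligible_subset[of "{1}"]) auto
qed auto

lemma two_sided_decay_mult_powr_le:
  assumes r: "r > 0" and \<sigma>: "\<bar>\<sigma>\<bar> \<le> a - d"
  shows "two_sided_decay a r * r powr (-\<sigma> - 1) \<le> two_sided_decay d r / r"
proof (cases "r \<le> 1")
  case True
  have "r powr (a - \<sigma> - 1) \<le> r powr (d - 1)"
    by (rule powr_mono') (use True r \<sigma> in auto)
  then show ?thesis
    using True r by (simp add: two_sided_decay_def powr_add[symmetric] powr_diff)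
next
  case False
  have "r powr (-a - \<sigma> - 1) \<le> r powr (-d - 1)"
    by (rule powr_mono) (use False \<sigma> in auto)
  then show ?thesis
    using False r by (simp add: two_sided_decay_def powr_add[symmetric] powr_diff)
qed

lemma norm_mellin_integrand:
  "r > 0 \<Longrightarrow> norm (mellin_integrand f s r) = \<bar>f r\<bar> * r powr (- Re s - 1)"
  by (simp add: mellin_integrand_def norm_mult norm_powr_real_powr)

lemma norm_mellin_integrand_le:
  assumes r: "r > 0" and s: "\<bar>Re s\<bar> \<le> a - d" and f: "\<bar>f r\<bar> \<le> C * two_sided_decay a r"
  shows "norm (mellin_integrand f s r) \<le> C * (two_sided_decay d r / r)"
proof -
  have "C \<ge> 0"
    using order_trans[OF abs_ge_zero f] two_sided_decay_pos[OF r, of a] by (simp add: zero_le_mult_iff)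
  have "norm (mellin_integrand f s r) = \<bar>f r\<bar> * r powr (- Re s - 1)"
    using r by (rule norm_mellin_integrand)
  also have "\<dots> \<le> C * (two_sided_decay a r * r powr (- Re s - 1))"
    using mult_right_mono[OF f] by (simp add: mult.assoc)
  also have "\<dots> \<le> C * (two_sided_decay d r / r)"
    using two_sided_decay_mult_powr_le[OF r s] \<open>C \<ge> 0\<close> by (rule mult_left_mono)
  finally show ?thesis .
qed

lemma continuous_on_mellin_integrand:
  assumes "continuous_on {0<..} f"
  shows "continuous_on {0<..} (mellin_integrand f s)"
  unfolding mellin_integrand_def
  by (intro continuous_intros continuous_on_compose2[OF assms]) auto

lemma mellin_integrand_has_field_derivative:
  assumes "r > 0"
  shows "((\<lambda>s. mellin_integrand f s r) has_field_derivative
           - Ln (of_real r) * mellin_integrand f s r) (at s within U)"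
proof -
  have "((\<lambda>s. of_real r powr (- s - 1)) has_field_derivative
          Ln (of_real r) * of_real r powr (- s - 1) * (- 1)) (at s)"
    using assms
    by (intro DERIV_chain2[OF has_field_derivative_powr_right]) (auto intro!: derivative_eq_intros)
  then show ?thesis
    unfolding mellin_integrand_def
    by (rule has_field_derivative_at_within[OF DERIV_cmult[THEN DERIV_cong]]) (simp add: algebra_simps)
qed

lemma mellin_truncated_holomorphic:
  assumes f: "continuous_on {0<..} f" and "a > 0"
  shows "(\<lambda>s. integral {a..b} (mellin_integrand f s)) holomorphic_on U"
proof -
  have ab: "{a..b} \<subseteq> {0<..}"
    using \<open>a > 0\<close> by auto
  have "(\<lambda>s. integral (cbox a b) (mellin_integrand f s)) holomorphic_on UNIV"
  proof (rule leibniz_rule_holomorphic)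
    show "((\<lambda>s. mellin_integrand f s r) has_field_derivative
            - Ln (of_real r) * mellin_integrand f s r) (at s within UNIV)"
      if "r \<in> cbox a b" for s r
      using that ab by (intro mellin_integrand_has_field_derivative) auto
    show "mellin_integrand f s integrable_on cbox a b" for s
      using ab by (auto intro!: integrable_continuous_real
                        continuous_on_subset[OF continuous_on_mellin_integrand[OF f]])
    show "continuous_on (UNIV \<times> cbox a b) (\<lambda>(s, r). - Ln (of_real r) * mellin_integrand f s r)"
      unfolding mellin_integrand_def case_prod_unfold using ab
      by (intro continuous_intros continuous_on_compose2[OF f]) (auto simp: nonpos_Reals_def)
  qed simp
  then show ?thesis
    by (auto intro: holomorphic_on_subset)
qed

lemma norm_integral_diff_subset_le:
  fixes g :: "'a::euclidean_space \<Rightarrow> 'b::banach"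
  assumes g: "g integrable_on S" "g integrable_on K" and h: "h integrable_on S" "h integrable_on K"
    and "K \<subseteq> S" and gh: "\<And>x. x \<in> S \<Longrightarrow> norm (g x) \<le> h x"
  shows "norm (integral S g - integral K g) \<le> integral (S - K) h"
proof -
  have neg: "negligible (K - S)"
    using \<open>K \<subseteq> S\<close> by simp
  have "integral S g - integral K g = integral (S - K) g"
    using integral_setdiff[OF g neg] by simp
  also have "norm \<dots> \<le> integral (S - K) h"
    using g h neg gh by (intro integral_norm_bound_integral integrable_setdiff) (auto dest: integrable_integral)
  finally show ?thesis .
qed

lemma tendsto_integral_complement_exhaustion:
  fixes h :: "'a::euclidean_space \<Rightarrow> real"
  assumes h: "h integrable_on S" "\<And>x. x \<in> S \<Longrightarrow> h x \<ge> 0"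
    and K: "\<And>k. K k \<subseteq> S" "\<And>k. h integrable_on K k"
    and exhaust: "\<And>x. x \<in> S \<Longrightarrow> \<forall>\<^sub>F k in sequentially. x \<in> K k"
  shows "(\<lambda>k. integral (S - K k) h) \<longlonglongrightarrow> 0"
proof -
  have restrict: "integral S (\<lambda>x. if x \<in> K k then h x else 0) = integral (K k) h" for k
    using K(1) by (simp add: integral_restrict_Int Int_absorb2)
  have "(\<lambda>k. integral S (\<lambda>x. if x \<in> K k then h x else 0)) \<longlonglongrightarrow> integral S h"
  proof (rule dominated_convergence(2)[OF _ h(1)])
    show "(\<lambda>x. if x \<in> K k then h x else 0) integrable_on S" for k
      using K by (simp add: integrable_restrict_Int Int_absorb2)
    show "norm (if x \<in> K k then h x else 0) \<le> h x" if "x \<in> S" for k x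
      using h(2)[OF that] by simp
    show "(\<lambda>k. if x \<in> K k then h x else 0) \<longlonglongrightarrow> h x" if "x \<in> S" for x
      using exhaust[OF that] by (rule tendsto_eventually[OF eventually_mono]) simp
  qed
  then have "(\<lambda>k. integral S h - integral (K k) h) \<longlonglongrightarrow> integral S h - integral S h"
    unfolding restrict by (intro tendsto_diff tendsto_const)
  moreover have "integral (S - K k) h = integral S h - integral (K k) h" for k
    using K by (intro integral_setdiff h(1)) auto
  ultimately show ?thesis
    by simp
qed

lemma eventually_in_reciprocal_interval:
  assumes "r > (0::real)"
  shows "\<forall>\<^sub>F k in sequentially. r \<in> {1 / real (Suc k)..real (Suc k)}"
proof -
  have "filterlim (\<lambda>k. real (Suc k)) at_top sequentially"
    by (rule filterlim_compose[OF filterlim_real_sequentially filterlim_Suc])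
  then have "\<forall>\<^sub>F k in sequentially. max r (1 / r) \<le> real (Suc k)"
    by (simp only: filterlim_at_top)
  then show ?thesis
    by (rule eventually_mono) (use assms in \<open>auto simp: field_simps\<close>)
qed

lemma mellin_integrand_absolutely_integrable:
  assumes f: "continuous_on {0<..} f"
    and bound: "\<And>r. r > 0 \<Longrightarrow> \<bar>f r\<bar> \<le> C * two_sided_decay a r"
    and s: "\<bar>Re s\<bar> < a"
  shows "mellin_integrand f s absolutely_integrable_on {0<..}"
proof (rule measurable_bounded_by_integrable_imp_absolutely_integrable)
  define d where "d = a - \<bar>Re s\<bar>"
  show "mellin_integrand f s \<in> borel_measurable (lebesgue_on {0<..})"
    by (rule continuous_imp_measurable_on_sets_lebesgue[OF continuous_on_mellin_integrand[OF f]]) simp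
  show "(\<lambda>r. C * (two_sided_decay d r / r)) integrable_on {0<..}"
    using s by (intro integrable_on_mult_right two_sided_decay_div_integrable) (simp add: d_def)
  show "norm (mellin_integrand f s r) \<le> C * (two_sided_decay d r / r)" if "r \<in> {0<..}" for r
    using that bound[of r] by (intro norm_mellin_integrand_le) (auto simp: d_def)
qed simp

lemma mellin_truncations_uniform_limit:
  assumes f: "continuous_on {0<..} f"
    and bound: "\<And>r. r > 0 \<Longrightarrow> \<bar>f r\<bar> \<le> C * two_sided_decay a r"
    and strip: "\<And>s. s \<in> B \<Longrightarrow> \<bar>Re s\<bar> \<le> a - d" and "d > 0"
  shows "uniform_limit B (\<lambda>k s. integral {1 / real (Suc k)..real (Suc k)} (mellin_integrand f s))
           (mellin f) sequentially"
proof -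
  define K where "K k = {1 / real (Suc k)..real (Suc k)}" for k
  define h where "h r = C * (two_sided_decay d r / r)" for r
  have "C \<ge> 0"
    using bound[of 1] by (simp add: two_sided_decay_def)
  have K: "K k \<subseteq> {0<..}" for k
    by (auto simp: K_def intro: less_le_trans[of 0 "1 / real (Suc k)"])
  have h: "h integrable_on {0<..}"
    unfolding h_def using two_sided_decay_div_integrable[OF \<open>d > 0\<close>] by (rule integrable_on_mult_right)
  have tails: "(\<lambda>k. integral ({0<..} - K k) h) \<longlonglongrightarrow> 0"
  proof (rule tendsto_integral_complement_exhaustion[OF h _ K])
    show "h integrable_on K k" for k
      using h unfolding K_def by (rule integrable_on_subinterval) (use K in \<open>simp add: K_def\<close>)
    show "h r \<ge> 0" if "r \<in> {0<..}" for r
      using that \<open>C \<ge> 0\<close> two_sided_decay_pos[of r d] by (simp add: h_def)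
    show "\<forall>\<^sub>F k in sequentially. r \<in> K k" if "r \<in> {0<..}" for r
      using that eventually_in_reciprocal_interval by (simp add: K_def)
  qed
  have truncation_error: "dist (integral (K k) (mellin_integrand f s)) (mellin f s) \<le> integral ({0<..} - K k) h"
    if "s \<in> B" for k s
  proof -
    have "\<bar>Re s\<bar> < a"
      using strip[OF that] \<open>d > 0\<close> by linarith
    with f bound have "mellin_integrand f s absolutely_integrable_on {0<..}"
      by (rule mellin_integrand_absolutely_integrable)
    then have "mellin_integrand f s integrable_on {0<..}"
      by (rule set_lebesgue_integral_eq_integral(1))
    moreover have "norm (mellin_integrand f s r) \<le> h r" if "r \<in> {0<..}" for r
      unfolding h_def using that strip[OF \<open>s \<in> B\<close>] bound[of r] by (intro norm_mellin_integrand_le) auto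
    ultimately show ?thesis
      unfolding dist_norm mellin_def norm_minus_commute[of "integral (K k) _"]
      using K h by (intro norm_integral_diff_subset_le) (auto simp: K_def intro: integrable_on_subinterval)
  qed
  show ?thesis
    unfolding uniform_limit_iff K_def[symmetric]
  proof (intro allI impI)
    fix e :: real
    assume "e > 0"
    from order_tendstoD(2)[OF tails this]
    show "\<forall>\<^sub>F k in sequentially. \<forall>s\<in>B. dist (integral (K k) (mellin_integrand f s)) (mellin f s) < e"
      by (rule eventually_mono) (meson truncation_error le_less_trans)
  qed
qed

lemma mellin_holomorphic_on_ball:
  assumes f: "continuous_on {0<..} f"
    and bound: "\<And>r. r > 0 \<Longrightarrow> \<bar>f r\<bar> \<le> C * two_sided_decay a r"
    and strip: "\<And>s. s \<in> cball s0 \<rho> \<Longrightarrow> \<bar>Re s\<bar> \<le> a - d" and "d > 0"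
  shows "mellin f holomorphic_on ball s0 \<rho>"
proof (rule holomorphic_uniform_limit[OF _ mellin_truncations_uniform_limit[OF f bound strip \<open>d > 0\<close>]])
  have "(\<lambda>s. integral {1 / real (Suc k)..real (Suc k)} (mellin_integrand f s)) holomorphic_on cball s0 \<rho>" for k
    by (rule mellin_truncated_holomorphic[OF f]) simp
  then show "\<forall>\<^sub>F k in sequentially.
               continuous_on (cball s0 \<rho>) (\<lambda>s. integral {1 / real (Suc k)..real (Suc k)} (mellin_integrand f s))
             \<and> (\<lambda>s. integral {1 / real (Suc k)..real (Suc k)} (mellin_integrand f s)) holomorphic_on ball s0 \<rho>"
    by (auto intro: always_eventually holomorphic_on_imp_continuous_on
                    holomorphic_on_subset[OF _ ball_subset_cball])
qed auto

lemma mellin_analytic_on_strip: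
  assumes f: "continuous_on {0<..} f"
    and bound: "\<And>r. r > 0 \<Longrightarrow> \<bar>f r\<bar> \<le> C * two_sided_decay a r"
  shows "mellin f analytic_on {s. \<bar>Re s\<bar> < a}"
  unfolding analytic_on_def
proof
  fix s0
  assume "s0 \<in> {s. \<bar>Re s\<bar> < a}"
  then have d: "(a - \<bar>Re s0\<bar>) / 2 > 0"
    by simp
  have "\<bar>Re s\<bar> \<le> a - (a - \<bar>Re s0\<bar>) / 2" if "s \<in> cball s0 ((a - \<bar>Re s0\<bar>) / 2)" for s
    using that abs_Re_le_cmod[of "s - s0"] abs_triangle_ineq2[of "Re s" "Re s0"]
    by (simp add: dist_norm norm_minus_commute field_simps)
  with d show "\<exists>\<rho>>0. mellin f holomorphic_on ball s0 \<rho>"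
    by (blast intro: mellin_holomorphic_on_ball[OF f bound])
qed

lemma Kfrak_eq:
  assumes "r > 0"
  shows "Kfrak \<alpha> r = (4 * (sin \<alpha>)\<^sup>2 + (r + 1 / r - 2)) powr (-1/4)"
proof -
  have "(sqrt r - 1 / sqrt r)\<^sup>2 = r + 1 / r - 2"
    using assms by (simp add: power2_diff power_divide field_simps power2_eq_square)
  then show ?thesis
    by (simp add: Kfrak_def)
qed

lemma continuous_on_Kfrak:
  assumes "sin \<alpha> \<noteq> 0"
  shows "continuous_on {0<..} (Kfrak \<alpha>)"
proof -
  have "4 * (sin \<alpha>)\<^sup>2 + (sqrt r - 1 / sqrt r)\<^sup>2 > 0" for r
    using assms by (intro add_pos_nonneg) auto
  then show ?thesis
    unfolding Kfrak_def by (intro continuous_intros) (auto simp: less_imp_neq[symmetric])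
qed

lemma Kfrak_base_ge:
  fixes m r :: real
  assumes "r > 0" and "0 \<le> m" "m \<le> 4"
  shows "m / 4 * (r + 1 / r) \<le> m + (r + 1 / r - 2)"
proof -
  have "r + 1 / r - 2 = (r - 1)\<^sup>2 / r"
    using assms by (simp add: power2_diff field_simps power2_eq_square)
  then have "r + 1 / r - 2 \<ge> 0"
    using assms by simp
  then have "(1 - m / 4) * (r + 1 / r - 2) \<ge> 0"
    using assms by simp
  then show ?thesis
    using \<open>0 \<le> m\<close> by (simp add: algebra_simps)
qed

lemma powr_neg_le_two_sided_decay:
  assumes r: "r > 0" and "b \<ge> 0" "c > 0" and x: "c * (r + 1 / r) \<le> x"
  shows "x powr (-b) \<le> c powr (-b) * two_sided_decay b r"
proof -
  define w where "w = (if r \<le> 1 then 1 / r else r)"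
  have w: "0 < w" "w \<le> r + 1 / r"
    using r by (auto simp: w_def)
  have "x powr (-b) \<le> (c * w) powr (-b)"
    using w \<open>c > 0\<close> \<open>b \<ge> 0\<close> x by (intro powr_mono2') (auto intro: order_trans[OF mult_left_mono])
  also have "\<dots> = c powr (-b) * two_sided_decay b r"
    using r \<open>c > 0\<close> by (simp add: w_def two_sided_decay_def powr_mult powr_divide powr_minus_divide)
  finally show ?thesis .
qed

lemma powr_neg_diff_le:
  fixes x y p :: real
  assumes "0 < y" "y \<le> x" "p > 0"
  shows "y powr (-p) - x powr (-p) \<le> p * (x - y) * y powr (-p - 1)"
proof (cases "y = x")
  case False
  then have "y < x"
    using assms by simp
  then have "\<exists>z. y < z \<and> z < x \<and> x powr (-p) - y powr (-p) = (x - y) * (-p * z powr (-p - 1))"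
    by (rule MVT2[OF _ has_real_derivative_powr]) (use assms in auto)
  then obtain z where z: "y < z" "z < x"
    and mvt: "x powr (-p) - y powr (-p) = (x - y) * (-p * z powr (-p - 1))"
    by blast
  have "z powr (-p - 1) \<le> y powr (-p - 1)"
    using assms z by (intro powr_mono2') auto
  then have "p * (x - y) * z powr (-p - 1) \<le> p * (x - y) * y powr (-p - 1)"
    using assms \<open>y < x\<close> by (intro mult_left_mono) auto
  then show ?thesis
    using mvt by (simp add: algebra_simps)
qed simp

lemma Kfrak_bound:
  assumes "0 < \<alpha>" "\<alpha> < pi" "r > 0"
  shows "\<bar>Kfrak \<alpha> r\<bar> \<le> (sin \<alpha>)\<^sup>2 powr (- (1/4)) * two_sided_decay (1/4) r"
proof -
  have "sin \<alpha> > 0"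
    using assms by (intro sin_gt_zero)
  moreover have "(sin \<alpha>)\<^sup>2 \<le> 1"
    by (simp add: abs_square_le_1)
  ultimately show ?thesis
    using Kfrak_base_ge[of r "4 * (sin \<alpha>)\<^sup>2"] \<open>r > 0\<close>
    by (simp add: Kfrak_eq powr_neg_le_two_sided_decay)
qed

lemma Kfrak_diff_bound:
  assumes "0 < \<alpha>" "\<alpha> < pi" "r > 0"
  shows "\<bar>Kfrak (pi/2) r - Kfrak \<alpha> r\<bar> \<le> (sin \<alpha>)\<^sup>2 powr (- (5/4)) * two_sided_decay (5/4) r"
proof -
  define q where "q = r + 1 / r"
  define y where "y = 4 * (sin \<alpha>)\<^sup>2 + (q - 2)"
  define x where "x = 4 + (q - 2)"
  have "sin \<alpha> > 0"
    using assms by (intro sin_gt_zero)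
  have "(sin \<alpha>)\<^sup>2 \<le> 1"
    by (simp add: abs_square_le_1)
  then have y_ge: "(sin \<alpha>)\<^sup>2 * q \<le> y" and "y \<le> x"
    using Kfrak_base_ge[of r "4 * (sin \<alpha>)\<^sup>2"] \<open>r > 0\<close> by (simp_all add: x_def y_def q_def)
  have "0 < (sin \<alpha>)\<^sup>2 * q"
    using \<open>sin \<alpha> > 0\<close> \<open>r > 0\<close> by (simp add: q_def add_pos_pos)
  with y_ge have "0 < y"
    by linarith
  have "\<bar>Kfrak (pi/2) r - Kfrak \<alpha> r\<bar> = y powr (- (1/4)) - x powr (- (1/4))"
    using \<open>0 < y\<close> \<open>y \<le> x\<close> \<open>r > 0\<close> powr_mono2'[of "-1/4" y x]
    by (simp add: Kfrak_eq x_def y_def q_def)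
  also have "\<dots> \<le> 1/4 * (x - y) * y powr (- (1/4) - 1)"
    using powr_neg_diff_le[OF \<open>0 < y\<close> \<open>y \<le> x\<close>, of "1/4"] by simp
  also have "\<dots> \<le> y powr (- (5/4))"
    using \<open>0 < y\<close> by (simp add: x_def y_def)
  also have "\<dots> \<le> (sin \<alpha>)\<^sup>2 powr (- (5/4)) * two_sided_decay (5/4) r"
    using y_ge \<open>sin \<alpha> > 0\<close> \<open>r > 0\<close> by (intro powr_neg_le_two_sided_decay) (auto simp: q_def)
  finally show ?thesis .
qed

theorem proposition3:
  fixes \<alpha> :: real
  assumes "0 < \<alpha>" and "\<alpha> < pi"
  shows "(\<forall>s. \<bar>Re s\<bar> < 1/4 \<longrightarrow>
            mellin_integrand (Kfrak \<alpha>) s absolutely_integrable_on {0<..})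
       \<and> mellin (Kfrak \<alpha>) analytic_on {s. \<bar>Re s\<bar> < 1/4}
       \<and> (\<forall>s. \<bar>Re s\<bar> < 5/4 \<longrightarrow>
            mellin_integrand (\<lambda>r. Kfrak (pi/2) r - Kfrak \<alpha> r) s absolutely_integrable_on {0<..})
       \<and> mellin (\<lambda>r. Kfrak (pi/2) r - Kfrak \<alpha> r) analytic_on {s. \<bar>Re s\<bar> < 5/4}"
proof -
  have "sin \<alpha> \<noteq> 0"
    using sin_gt_zero[OF assms] by simp
  then have K_cont: "continuous_on {0<..} (Kfrak \<alpha>)"
    and diff_cont: "continuous_on {0<..} (\<lambda>r. Kfrak (pi/2) r - Kfrak \<alpha> r)"
    by (auto intro!: continuous_intros continuous_on_Kfrak)
  note K_bound = Kfrak_bound[OF assms] and diff_bound = Kfrak_diff_bound[OF assms]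
  have "mellin_integrand (Kfrak \<alpha>) s absolutely_integrable_on {0<..}" if "\<bar>Re s\<bar> < 1/4" for s
    using K_cont K_bound that by (rule mellin_integrand_absolutely_integrable)
  moreover have "mellin_integrand (\<lambda>r. Kfrak (pi/2) r - Kfrak \<alpha> r) s absolutely_integrable_on {0<..}"
    if "\<bar>Re s\<bar> < 5/4" for s
    using diff_cont diff_bound that by (rule mellin_integrand_absolutely_integrable)
  ultimately show ?thesis
    using mellin_analytic_on_strip[OF K_cont K_bound] mellin_analytic_on_strip[OF diff_cont diff_bound]
    by blast
qed

end
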